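(* For integers $d\ge 3$ and $n\ge 1.5(d+1)$, $$m^*(n,d)\le \min_{2\le i\le \lceil n/2\rceil}\Big\{m^*\big(\lceil n/i\rceil,d\big)+i\cdot m^*\big(\lceil n/i\rceil,\lfloor d/2\rfloor\big)\Big\}.$$
   Context: For a binary matrix $M$ and a nonempty set $S$ of its columns, $S$ is a stopping set if the submatrix formed by $S$ has no row with exactly one $1$; the stopping distance $s(M)$ is the minimum size of a stopping set ($+\infty$ if $M$ has no stopping set). For a positive integer $d$, $M$ is $d$-decodable if $s(M)\ge d+1$. For positive integers $n,d$ (with $d$ possibly exceeding $n$), $m^*(n,d)$ is the minimum $m$ such that an $m\times n$ $d$-decodable binary matrix exists. *)

theory Defs
  imports Complex_Main "HOL-Library.Extended_Nat"
begin

text \<open>An m x n binary matrix is represented by a function M :: nat => nat => bool,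
  where M r j (for r < m, j < n) says whether the entry in row r, column j is 1.
  Entries outside the index ranges are irrelevant.\<close>

definition stopping_set :: "nat \<Rightarrow> nat \<Rightarrow> (nat \<Rightarrow> nat \<Rightarrow> bool) \<Rightarrow> nat set \<Rightarrow> bool" where
  "stopping_set m n M S \<longleftrightarrow>
     S \<noteq> {} \<and> S \<subseteq> {..<n} \<and> (\<forall>r<m. card {j \<in> S. M r j} \<noteq> 1)"

definition stopping_distance :: "nat \<Rightarrow> nat \<Rightarrow> (nat \<Rightarrow> nat \<Rightarrow> bool) \<Rightarrow> enat" where
  "stopping_distance m n M = Inf ((\<lambda>S. enat (card S)) ` {S. stopping_set m n M S})"

definition decodable :: "nat \<Rightarrow> nat \<Rightarrow> nat \<Rightarrow> (nat \<Rightarrow> nat \<Rightarrow> bool) \<Rightarrow> bool" where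
  "decodable d m n M \<longleftrightarrow> stopping_distance m n M \<ge> enat (d + 1)"

definition m_star :: "nat \<Rightarrow> nat \<Rightarrow> nat" where
  "m_star n d = (LEAST m. \<exists>M. decodable d m n M)"

end

theory Submission
  imports Defs
begin

text \<open>Split the n columns into i blocks of k consecutive columns. Stack a d-decodable
  k-column matrix A, repeated on every block, on top of the block-diagonal matrix with i copies
  of a (d div 2)-decodable k-column matrix B. A stopping set meeting two blocks restricts to a
  stopping set of B on each of them, so it has at least 2 (d div 2 + 1) \<ge> d + 1 columns; a
  stopping set inside one block is a stopping set of A. Hence the stacked matrix is
  d-decodable with m*(k,d) + i m*(k, d div 2) rows, and k = \<lceil>n/i\<rceil> gives the bound.\<close>

lemma decodable_iff_stopping_sets_large:
  "decodable d m n M \<longleftrightarrow> (\<forall>S. stopping_set m n M S \<longrightarrow> d + 1 \<le> card S)"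
  unfolding decodable_def stopping_distance_def by (auto simp: le_Inf_iff)

lemma decodable_identity: "decodable d n n (\<lambda>r j. r = j)"
  unfolding decodable_iff_stopping_sets_large
proof (intro allI impI)
  fix S assume S: "stopping_set n n (\<lambda>r j. r = j) S"
  then obtain j where j: "j \<in> S" "j < n" by (auto simp: stopping_set_def)
  have "{j' \<in> S. j = j'} = {j}" using j by auto
  then show "d + 1 \<le> card S" using S j by (auto simp: stopping_set_def)
qed

lemma m_star_attained: "\<exists>M. decodable d (m_star n d) n M"
  unfolding m_star_def by (rule LeastI_ex) (use decodable_identity in blast)

lemma m_star_le: "decodable d m n M \<Longrightarrow> m_star n d \<le> m"
  unfolding m_star_def by (rule Least_le) blast

lemma stopping_set_image:
  assumes "inj_on f S" "S \<noteq> {}" "f ` S \<subseteq> {..<k}"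
    and "\<forall>r<m. card {j \<in> S. B r (f j)} \<noteq> 1"
  shows "stopping_set m k B (f ` S)"
proof -
  have "card {p \<in> f ` S. B r p} = card {j \<in> S. B r (f j)}" for r
  proof -
    have "{p \<in> f ` S. B r p} = f ` {j \<in> S. B r (f j)}" by auto
    then show ?thesis using assms(1) by (simp add: card_image inj_on_subset)
  qed
  then show ?thesis using assms by (simp add: stopping_set_def)
qed

lemma inj_on_mod_if_same_div:
  fixes k :: nat
  assumes "\<forall>j\<in>X. j div k = g" shows "inj_on (\<lambda>j. j mod k) X"
proof (rule inj_onI)
  fix x y assume "x \<in> X" "y \<in> X" and "x mod k = y mod k"
  then show "x = y" using assms div_mult_mod_eq[of x k] div_mult_mod_eq[of y k] by simp
qed

definition block_stack ::
    "nat \<Rightarrow> nat \<Rightarrow> nat \<Rightarrow> (nat \<Rightarrow> nat \<Rightarrow> bool) \<Rightarrow> (nat \<Rightarrow> nat \<Rightarrow> bool) \<Rightarrow> nat \<Rightarrow> nat \<Rightarrow> bool" where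
  "block_stack k mA mB A B r j =
     (if r < mA then A r (j mod k)
      else j div k = (r - mA) div mB \<and> B ((r - mA) mod mB) (j mod k))"

lemma block_stack_top_row: "r < mA \<Longrightarrow> block_stack k mA mB A B r j = A r (j mod k)"
  by (simp add: block_stack_def)

lemma block_stack_block_row:
  "r < mB \<Longrightarrow> block_stack k mA mB A B (mA + g * mB + r) j = (j div k = g \<and> B r (j mod k))"
  by (simp add: block_stack_def)

lemma stopping_set_block_stack_block_card:
  assumes B: "decodable e mB k B" and k: "0 < k" and nk: "n \<le> i * k"
    and S: "stopping_set (mA + i * mB) n (block_stack k mA mB A B) S"
    and X_ne: "S \<inter> {j. j div k = g} \<noteq> {}"
  shows "e + 1 \<le> card (S \<inter> {j. j div k = g})"
proof -
  let ?X = "S \<inter> {j. j div k = g}"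
  have S_sub: "S \<subseteq> {..<n}"
    and S_rows: "\<forall>r < mA + i * mB. card {j \<in> S. block_stack k mA mB A B r j} \<noteq> 1"
    using S by (auto simp: stopping_set_def)
  have inj: "inj_on (\<lambda>j. j mod k) ?X" by (rule inj_on_mod_if_same_div[where g = g]) auto
  have "g < i"
    using X_ne S_sub nk by (auto intro: less_mult_imp_div_less order.strict_trans2)
  have "card {j \<in> ?X. B r (j mod k)} \<noteq> 1" if r: "r < mB" for r
  proof -
    have "g * mB + r < Suc g * mB" using r by simp
    also have "\<dots> \<le> i * mB" using \<open>g < i\<close> by (intro mult_le_mono1) simp
    finally have "mA + g * mB + r < mA + i * mB" by simp
    moreover have "{j \<in> S. block_stack k mA mB A B (mA + g * mB + r) j} = {j \<in> ?X. B r (j mod k)}"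
      using r by (auto simp: block_stack_block_row)
    ultimately show ?thesis using S_rows by metis
  qed
  then have "stopping_set mB k B ((\<lambda>j. j mod k) ` ?X)"
    using inj X_ne k by (intro stopping_set_image) auto
  then have "e + 1 \<le> card ((\<lambda>j. j mod k) ` ?X)"
    using B by (simp add: decodable_iff_stopping_sets_large)
  then show ?thesis using inj by (simp add: card_image)
qed

lemma stopping_set_block_stack_one_block_card:
  assumes A: "decodable d mA k A" and k: "0 < k"
    and S: "stopping_set (mA + i * mB) n (block_stack k mA mB A B) S"
    and one_block: "\<forall>j\<in>S. j div k = g"
  shows "d + 1 \<le> card S"
proof -
  have S_ne: "S \<noteq> {}"
    and S_rows: "\<forall>r < mA + i * mB. card {j \<in> S. block_stack k mA mB A B r j} \<noteq> 1"
    using S by (auto simp: stopping_set_def)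
  have inj: "inj_on (\<lambda>j. j mod k) S" using one_block by (rule inj_on_mod_if_same_div)
  have "card {j \<in> S. A r (j mod k)} \<noteq> 1" if r: "r < mA" for r
  proof -
    have "{j \<in> S. block_stack k mA mB A B r j} = {j \<in> S. A r (j mod k)}"
      using r by (simp add: block_stack_top_row)
    then show ?thesis using S_rows r by (metis trans_less_add1)
  qed
  then have "stopping_set mA k A ((\<lambda>j. j mod k) ` S)"
    using inj S_ne k by (intro stopping_set_image) auto
  then have "d + 1 \<le> card ((\<lambda>j. j mod k) ` S)"
    using A by (simp add: decodable_iff_stopping_sets_large)
  then show ?thesis using inj by (simp add: card_image)
qed

lemma decodable_block_stack:
  assumes A: "decodable d mA k A" and B: "decodable (d div 2) mB k B" and nk: "n \<le> i * k"
  shows "decodable d (mA + i * mB) n (block_stack k mA mB A B)"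
  unfolding decodable_iff_stopping_sets_large
proof (intro allI impI)
  fix S assume S: "stopping_set (mA + i * mB) n (block_stack k mA mB A B) S"
  then have S_sub: "S \<subseteq> {..<n}" and "S \<noteq> {}" by (auto simp: stopping_set_def)
  then obtain j0 where j0: "j0 \<in> S" by blast
  have S_fin: "finite S" using S_sub finite_subset by blast
  have "j0 < i * k" using j0 S_sub nk by auto
  then have k: "0 < k" by (cases k) auto
  show "d + 1 \<le> card S"
  proof (cases "\<forall>j\<in>S. j div k = j0 div k")
    case True
    then show ?thesis by (rule stopping_set_block_stack_one_block_card[OF A k S])
  next
    case False
    then obtain j1 where j1: "j1 \<in> S" "j1 div k \<noteq> j0 div k" by blast
    let ?X0 = "S \<inter> {j. j div k = j0 div k}" and ?X1 = "S \<inter> {j. j div k = j1 div k}"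
    have "d div 2 + 1 \<le> card ?X0"
      using j0 by (intro stopping_set_block_stack_block_card[OF B k nk S]) blast
    moreover have "d div 2 + 1 \<le> card ?X1"
      using j1 by (intro stopping_set_block_stack_block_card[OF B k nk S]) blast
    ultimately have "2 * (d div 2 + 1) \<le> card ?X0 + card ?X1" by simp
    also have "\<dots> = card (?X0 \<union> ?X1)"
      using S_fin j1 by (intro card_Un_disjoint[symmetric]) auto
    also have "\<dots> \<le> card S" using S_fin by (intro card_mono) auto
    finally show ?thesis by presburger
  qed
qed

lemma m_star_le_block_stack:
  assumes "n \<le> i * k"
  shows "m_star n d \<le> m_star k d + i * m_star k (d div 2)"
proof -
  obtain A where "decodable d (m_star k d) k A" using m_star_attained by blast
  moreover obtain B where "decodable (d div 2) (m_star k (d div 2)) k B"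
    using m_star_attained by blast
  ultimately show ?thesis using assms by (intro m_star_le) (rule decodable_block_stack)
qed

lemma le_mult_nat_ceiling_divide:
  assumes "0 < i" shows "n \<le> i * nat \<lceil>real n / real i\<rceil>"
proof -
  have "real n = real i * (real n / real i)" using assms by simp
  also have "\<dots> \<le> real i * real (nat \<lceil>real n / real i\<rceil>)"
    by (intro mult_left_mono) (linarith, simp)
  finally show ?thesis by (simp only: of_nat_mult[symmetric] of_nat_le_iff)
qed

lemma nat_floor_half: "nat \<lfloor>real d / 2\<rfloor> = d div 2"
  by (metis floor_divide_of_nat_eq nat_int of_nat_numeral)

theorem theorem5p1:
  fixes n d :: nat
  assumes "d \<ge> 3" and "real n \<ge> 1.5 * (real d + 1)"
  shows "m_star n d \<le>
    Min {m_star (nat \<lceil>real n / real i\<rceil>) d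
         + i * m_star (nat \<lceil>real n / real i\<rceil>) (nat \<lfloor>real d / 2\<rfloor>)
         | i. 2 \<le> i \<and> i \<le> nat \<lceil>real n / 2\<rceil>}" (is "_ \<le> Min ?X")
proof -
  have fin: "finite ?X"
    by (rule finite_image_set, rule finite_subset[of _ "{..nat \<lceil>real n / 2\<rceil>}"]) auto
  have "real n \<ge> 6" using assms by simp
  then have "2 \<le> nat \<lceil>real n / 2\<rceil>" by linarith
  then have ne: "?X \<noteq> {}" by blast
  have "m_star n d \<le> x" if "x \<in> ?X" for x
  proof -
    from that obtain i where "2 \<le> i"
      and x: "x = m_star (nat \<lceil>real n / real i\<rceil>) d
                + i * m_star (nat \<lceil>real n / real i\<rceil>) (d div 2)"
      unfolding nat_floor_half by blast
    then have "n \<le> i * nat \<lceil>real n / real i\<rceil>" by (simp add: le_mult_nat_ceiling_divide)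
    then show ?thesis unfolding x by (rule m_star_le_block_stack)
  qed
  then show ?thesis using Min_ge_iff[OF fin ne] by blast
qed

end
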